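(* For all integers $t,l,n\ge1$, $\beth(t,l^2,n)\ge \beth(2t,l,n)$.
   Context: Fix a totally ordered alphabet with the given number of letters. A word is primitive if it is not of the form $v^k$ with $k>1$. A system of type $X(t,l)$ is a finite sequence $(w_1,\dots,w_N)$ of primitive words of length $t$ over an $l$-letter totally ordered alphabet, no two of which are cyclic shifts of each other. For $1\le i\le N$, $1\le j\le t$, let $w(i,j)$ be the cyclic shift of $w_i$ beginning with its $j$-th letter. Define a strict partial order on the pairs $(i,j)$ by $(i_1,j_1)\prec(i_2,j_2)$ iff $i_1<i_2$ and $w(i_1,j_1)$ is lexicographically smaller than $w(i_2,j_2)$. The system is $n$-light if there are no $n$ pairwise $\prec$-incomparable pairs. $\beth(t,l,n)$ denotes the largest $N$ of an $n$-light system of type $X(t,l)$. *)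

theory Defs
  imports Main
begin

text \<open>Alphabet with l letters: the naturals 0,...,l-1 with their usual order.
Words are lists; positions and indices are 0-based.\<close>

definition primitive :: "nat list \<Rightarrow> bool" where
  "primitive w \<longleftrightarrow> \<not> (\<exists>v k. k > 1 \<and> w = concat (replicate k v))"

definition word_over :: "nat \<Rightarrow> nat \<Rightarrow> nat list \<Rightarrow> bool" where
  "word_over t l w \<longleftrightarrow> length w = t \<and> set w \<subseteq> {..<l}"

definition system_X :: "nat \<Rightarrow> nat \<Rightarrow> nat list list \<Rightarrow> bool" where
  "system_X t l ws \<longleftrightarrow>
     (\<forall>i < length ws. word_over t l (ws ! i) \<and> primitive (ws ! i)) \<and>
     (\<forall>a < length ws. \<forall>b < length ws. a \<noteq> b \<longrightarrow> (\<forall>j. ws ! a \<noteq> rotate j (ws ! b)))"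

text \<open>w(i,j): cyclic shift of the i-th word starting at its j-th letter (0-based).\<close>
definition shift_word :: "nat list list \<Rightarrow> nat \<times> nat \<Rightarrow> nat list" where
  "shift_word ws p = rotate (snd p) (ws ! fst p)"

definition prec :: "nat list list \<Rightarrow> nat \<times> nat \<Rightarrow> nat \<times> nat \<Rightarrow> bool" where
  "prec ws p q \<longleftrightarrow> fst p < fst q \<and> ord_class.lexordp (shift_word ws p) (shift_word ws q)"

definition n_light :: "nat \<Rightarrow> nat \<Rightarrow> nat list list \<Rightarrow> bool" where
  "n_light n t ws \<longleftrightarrow>
     \<not> (\<exists>S. S \<subseteq> {..<length ws} \<times> {..<t} \<and> card S = n \<and>
            (\<forall>p\<in>S. \<forall>q\<in>S. \<not> prec ws p q))"

definition beth :: "nat \<Rightarrow> nat \<Rightarrow> nat \<Rightarrow> nat" where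
  "beth t l n = (GREATEST N. \<exists>ws. length ws = N \<and> system_X t l ws \<and> n_light n t ws)"

end

theory Submission
  imports Defs
begin

text \<open>Reading a word of length 2t over l letters as a word of length t over the l^2
letters l a + b formed by consecutive pairs (a, b) is injective, order preserving for
the lexicographic order, and turns a shift by j into a shift by 2 j. Hence it maps an
n-light system of type X(2t, l) to an n-light system of type X(t, l^2) of the same size:
an antichain of n pairs (i, j) in the image gives the antichain of the pairs (i, 2 j).\<close>

fun pair_enc :: "nat \<Rightarrow> nat list \<Rightarrow> nat list" where
  "pair_enc l (a # b # r) = (l * a + b) # pair_enc l r"
| "pair_enc l _ = []"

fun pair_dec :: "nat \<Rightarrow> nat list \<Rightarrow> nat list" where
  "pair_dec l [] = []"
| "pair_dec l (c # r) = (c div l) # (c mod l) # pair_dec l r"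

lemma length_pair_enc: "length (pair_enc l w) = length w div 2"
  by (induction l w rule: pair_enc.induct) auto

lemma pair_enc_append: "even (length u) \<Longrightarrow> pair_enc l (u @ v) = pair_enc l u @ pair_enc l v"
  by (induction l u rule: pair_enc.induct) auto

lemma pair_dec_append: "pair_dec l (u @ v) = pair_dec l u @ pair_dec l v"
  by (induction u) auto

lemma pair_dec_concat_replicate:
  "pair_dec l (concat (replicate k v)) = concat (replicate k (pair_dec l v))"
  by (induction k) (auto simp: pair_dec_append)

lemma pair_dec_pair_enc:
  "even (length w) \<Longrightarrow> set w \<subseteq> {..<l} \<Longrightarrow> pair_dec l (pair_enc l w) = w"
  by (induction l w rule: pair_enc.induct) auto

lemma digit_pair_less:
  fixes a b c l :: nat
  assumes "a < c" and "b < l"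
  shows "l * a + b < l * c"
proof -
  have "l * a + b < l * (a + 1)" using assms(2) by simp
  also have "\<dots> \<le> l * c" using assms(1) by (intro mult_le_mono2) simp
  finally show ?thesis .
qed

lemma set_pair_enc: "set w \<subseteq> {..<l} \<Longrightarrow> set (pair_enc l w) \<subseteq> {..<l ^ 2}"
  by (induction l w rule: pair_enc.induct) (auto simp: power2_eq_square digit_pair_less)

lemma rotate1_pair_enc:
  "even (length w) \<Longrightarrow> rotate1 (pair_enc l w) = pair_enc l (rotate1 (rotate1 w))"
  by (cases "(l, w)" rule: pair_enc.cases) (auto simp: pair_enc_append)

lemma rotate_pair_enc:
  "even (length w) \<Longrightarrow> rotate j (pair_enc l w) = pair_enc l (rotate (2 * j) w)"
proof (induction j)
  case (Suc j)
  have "rotate (Suc j) (pair_enc l w) = rotate1 (pair_enc l (rotate (2 * j) w))"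
    using Suc by (simp add: rotate_Suc)
  also have "\<dots> = pair_enc l (rotate1 (rotate1 (rotate (2 * j) w)))"
    using Suc.prems by (intro rotate1_pair_enc) simp
  finally show ?case by (simp add: rotate_Suc)
qed simp

lemma lexordp_pair_enc:
  assumes "length u = length v" "even (length u)" "set u \<subseteq> {..<l}" "set v \<subseteq> {..<l}"
    and "ord_class.lexordp u v"
  shows "ord_class.lexordp (pair_enc l u) (pair_enc l v)"
  using assms
proof (induction l u arbitrary: v rule: pair_enc.induct)
  case (1 l a b r)
  then obtain c d s where v: "v = c # d # s"
    by (cases v; cases "tl v") auto
  have "b < l" using 1 by simp
  from "1.prems"(5) v consider "a < c" | "a = c" "b < d" | "a = c" "b = d" "ord_class.lexordp r s"
    by (simp add: ord.lexordp_simps) (metis not_less_iff_gr_or_eq)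
  then show ?case
  proof cases
    case 1
    then show ?thesis using v digit_pair_less[OF 1 \<open>b < l\<close>] by simp
  next
    case 3
    then show ?thesis using "1.IH"[of s] "1.prems" v by simp
  qed (use v in simp)
qed (auto simp: length_0_conv)

lemma primitive_pair_enc:
  assumes "even (length w)" "set w \<subseteq> {..<l}" "primitive w"
  shows "primitive (pair_enc l w)"
  unfolding primitive_def
proof
  assume "\<exists>v k. k > 1 \<and> pair_enc l w = concat (replicate k v)"
  then obtain v k where "k > 1" and power: "pair_enc l w = concat (replicate k v)"
    by blast
  have "w = concat (replicate k (pair_dec l v))"
    using assms(1,2) power pair_dec_pair_enc pair_dec_concat_replicate by metis
  with \<open>k > 1\<close> assms(3) show False unfolding primitive_def by blast
qed

lemma system_X_map_pair_enc:
  assumes sys: "system_X (2 * t) l ws"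
  shows "system_X t (l ^ 2) (map (pair_enc l) ws)"
  unfolding system_X_def
proof (intro conjI allI impI)
  have word: "length (ws ! i) = 2 * t \<and> set (ws ! i) \<subseteq> {..<l} \<and> primitive (ws ! i)"
    if "i < length ws" for i
    using sys that unfolding system_X_def word_over_def by auto
  fix i assume "i < length (map (pair_enc l) ws)"
  then have i: "i < length ws" by simp
  show "word_over t (l ^ 2) (map (pair_enc l) ws ! i)"
    using word[OF i] set_pair_enc[of "ws ! i" l] i by (simp add: word_over_def length_pair_enc)
  show "primitive (map (pair_enc l) ws ! i)"
    using word[OF i] i by (simp add: primitive_pair_enc)
next
  fix a b j assume "a < length (map (pair_enc l) ws)" "b < length (map (pair_enc l) ws)" "a \<noteq> b"
  then have a: "a < length ws" and b: "b < length ws" and "a \<noteq> b" by simp_all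
  have word: "even (length (ws ! i)) \<and> set (ws ! i) \<subseteq> {..<l}" if "i < length ws" for i
    using sys that unfolding system_X_def word_over_def by auto
  show "map (pair_enc l) ws ! a \<noteq> rotate j (map (pair_enc l) ws ! b)"
  proof
    assume "map (pair_enc l) ws ! a = rotate j (map (pair_enc l) ws ! b)"
    then have "pair_enc l (ws ! a) = pair_enc l (rotate (2 * j) (ws ! b))"
      using a b word[OF b] by (simp add: rotate_pair_enc)
    then have "ws ! a = rotate (2 * j) (ws ! b)"
      using word[OF a] word[OF b] pair_dec_pair_enc by (metis length_rotate set_rotate)
    then show False using sys a b \<open>a \<noteq> b\<close> unfolding system_X_def by blast
  qed
qed

lemma prec_map_pair_enc:
  assumes sys: "system_X (2 * t) l ws"
    and p: "fst p < length ws" and q: "fst q < length ws"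
    and "prec ws (fst p, 2 * snd p) (fst q, 2 * snd q)"
  shows "prec (map (pair_enc l) ws) p q"
proof -
  have word: "length (ws ! i) = 2 * t \<and> set (ws ! i) \<subseteq> {..<l}" if "i < length ws" for i
    using sys that unfolding system_X_def word_over_def by auto
  have "fst p < fst q"
    and "ord_class.lexordp (rotate (2 * snd p) (ws ! fst p)) (rotate (2 * snd q) (ws ! fst q))"
    using assms(4) unfolding prec_def shift_word_def by auto
  then have "ord_class.lexordp (pair_enc l (rotate (2 * snd p) (ws ! fst p)))
      (pair_enc l (rotate (2 * snd q) (ws ! fst q)))"
    using word[OF p] word[OF q] by (intro lexordp_pair_enc) auto
  then show ?thesis
    using \<open>fst p < fst q\<close> p q word[OF p] word[OF q]
    unfolding prec_def shift_word_def by (simp add: rotate_pair_enc)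
qed

lemma n_light_map_pair_enc:
  assumes sys: "system_X (2 * t) l ws" and light: "n_light n (2 * t) ws"
  shows "n_light n t (map (pair_enc l) ws)"
  unfolding n_light_def
proof
  assume "\<exists>S. S \<subseteq> {..<length (map (pair_enc l) ws)} \<times> {..<t} \<and> card S = n \<and>
            (\<forall>p\<in>S. \<forall>q\<in>S. \<not> prec (map (pair_enc l) ws) p q)"
  then obtain S where S: "S \<subseteq> {..<length ws} \<times> {..<t}" and "card S = n"
    and antichain: "\<forall>p\<in>S. \<forall>q\<in>S. \<not> prec (map (pair_enc l) ws) p q"
    by auto
  define double where "double = (\<lambda>p :: nat \<times> nat. (fst p, 2 * snd p))"
  have "inj double" unfolding double_def inj_def by auto
  have "double ` S \<subseteq> {..<length ws} \<times> {..<2 * t}"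
    using S unfolding double_def by auto
  moreover have "card (double ` S) = n"
    using \<open>card S = n\<close> \<open>inj double\<close> by (simp add: card_image inj_on_subset)
  moreover have "\<not> prec ws (double p) (double q)" if "p \<in> S" "q \<in> S" for p q
  proof
    assume "prec ws (double p) (double q)"
    moreover have "fst p < length ws" "fst q < length ws" using that S by auto
    ultimately have "prec (map (pair_enc l) ws) p q"
      unfolding double_def by (intro prec_map_pair_enc[OF sys]) auto
    then show False using that antichain by blast
  qed
  ultimately show False using light unfolding n_light_def by (metis (no_types, lifting) imageE)
qed

lemma system_X_length_le:
  assumes "system_X t l ws"
  shows "length ws \<le> card {w. set w \<subseteq> {..<l} \<and> length w = t}"
proof -
  have "distinct ws"
    using assms unfolding system_X_def distinct_conv_nth by (metis rotate0 id_apply)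
  moreover have "set ws \<subseteq> {w. set w \<subseteq> {..<l} \<and> length w = t}"
    using assms unfolding system_X_def word_over_def by (fastforce simp: in_set_conv_nth)
  then have "card (set ws) \<le> card {w. set w \<subseteq> {..<l} \<and> length w = t}"
    by (intro card_mono) (auto intro: finite_lists_length_eq)
  ultimately show ?thesis by (simp add: distinct_card)
qed

lemma length_le_beth:
  assumes "system_X t l ws" "n_light n t ws"
  shows "length ws \<le> beth t l n"
  unfolding beth_def
  by (rule Greatest_le_nat[where b = "card {w. set w \<subseteq> {..<l} \<and> length w = t}"])
    (use assms system_X_length_le in blast)+

text \<open>For n = 0 even the empty system fails to be n-light, and then beth is a junk value.\<close>
lemma beth_attained:
  assumes "n \<ge> 1"
  obtains ws where "length ws = beth t l n" "system_X t l ws" "n_light n t ws"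
proof -
  have "\<exists>ws. length ws = 0 \<and> system_X t l ws \<and> n_light n t ws"
    using assms by (intro exI[of _ "[]"]) (auto simp: system_X_def n_light_def)
  then have "\<exists>ws. length ws = beth t l n \<and> system_X t l ws \<and> n_light n t ws"
    unfolding beth_def
    by (rule GreatestI_nat[where b = "card {w. set w \<subseteq> {..<l} \<and> length w = t}"])
      (use system_X_length_le in blast)
  then show ?thesis using that by blast
qed

theorem mainTheorem18:
  fixes t l n :: nat
  assumes "t \<ge> 1" and "l \<ge> 1" and "n \<ge> 1"
  shows "beth t (l ^ 2) n \<ge> beth (2 * t) l n"
proof -
  obtain ws where "length ws = beth (2 * t) l n"
    and sys: "system_X (2 * t) l ws" and light: "n_light n (2 * t) ws"
    using beth_attained[OF assms(3)] .
  then have "beth (2 * t) l n = length (map (pair_enc l) ws)" by simp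
  also have "\<dots> \<le> beth t (l ^ 2) n"
    using system_X_map_pair_enc[OF sys] n_light_map_pair_enc[OF sys light] by (rule length_le_beth)
  finally show ?thesis .
qed

end
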